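(* Let $m\ge1$ and let $H_{2m}$ be as in the context with $\zeta=1$, i.e. $h(w,w')=1-4ww'$. Then for all $w_1,\ldots,w_{2m}$ at which the expression is defined, \[ H_{2m}(w_1,\ldots,w_{2m})=2^{m(m-1)} . \]
   Context: For a parameter $\zeta$, $h(w,w')=1-(3+\zeta^2)ww'+(1-\zeta^2)ww'(w+w')$ and \[ H_{2m}(w_1,\ldots,w_{2m})=\frac{\prod_{i=1}^m\prod_{j=m+1}^{2m}h(w_i,w_j)}{\prod_{1\le i<j\le m}(w_i-w_j)\prod_{m+1\le i<j\le 2m}(w_i-w_j)}\ \det_{1\le i\le m,\ m+1\le j\le 2m}\frac{1}{h(w_i,w_j)}. \] *)

theory Defs
  imports Complex_Main "Jordan_Normal_Form.Determinant"
begin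

definition h_fun :: "complex \<Rightarrow> complex \<Rightarrow> complex \<Rightarrow> complex" where
  "h_fun \<zeta> w w' = 1 - (3 + \<zeta>^2) * w * w' + (1 - \<zeta>^2) * w * w' * (w + w')"

definition H_fun :: "complex \<Rightarrow> nat \<Rightarrow> (nat \<Rightarrow> complex) \<Rightarrow> complex" where
  "H_fun \<zeta> m w =
     (\<Prod>i\<in>{1..m}. \<Prod>j\<in>{m+1..2*m}. h_fun \<zeta> (w i) (w j))
     / ((\<Prod>i\<in>{1..m}. \<Prod>j\<in>{i+1..m}. (w i - w j))
        * (\<Prod>i\<in>{m+1..2*m}. \<Prod>j\<in>{i+1..2*m}. (w i - w j)))
     * det (mat m m (\<lambda>(i, j). 1 / h_fun \<zeta> (w (i + 1)) (w (m + j + 1))))"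

end

theory Submission
  imports Defs
begin

(* For zeta = 1 the kernel is h(w,w') = 1 - 4 w w', so the determinant in H_{2m} is the
   Cauchy-type determinant det [1 / (1 - x_i y_j)] with x_i = 4 w_i and y_j = w_{m+j}.
   The proof rests on the classical evaluation
     det [1 / (1 - x_i y_j)] * prod_{i,j} (1 - x_i y_j) = prod_{i<j} (x_i - x_j) * prod_{i<j} (y_i - y_j),
   proved by induction on the size: subtracting the first row from the others and then the
   first column from the others leaves, after pulling out row and column factors, a unit
   first row above a scaled copy of the smaller Cauchy matrix.
   Since x_i - x_j = 4 (w_i - w_j), the Vandermonde-type factors cancel against the
   denominator of H_{2m} except for 4^(m(m-1)/2) = 2^(m(m-1)). *)

(* Multiplying row i by f i and column j by g j multiplies the determinant by all these factors;
   each term of the Leibniz expansion picks up every f i and (via the permutation) every g j. *)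
lemma det_scale_rows_cols:
  fixes A B :: "'a::comm_ring_1 mat"
  assumes A: "A \<in> carrier_mat n n" and B: "B \<in> carrier_mat n n"
    and entries: "\<And>i j. i < n \<Longrightarrow> j < n \<Longrightarrow> B $$ (i,j) = f i * A $$ (i,j) * g j"
  shows "det B = (\<Prod>i<n. f i) * det A * (\<Prod>j<n. g j)"
proof -
  have term_eq: "(\<Prod>i = 0..<n. B $$ (i, p i))
      = (\<Prod>i<n. f i) * (\<Prod>j<n. g j) * (\<Prod>i = 0..<n. A $$ (i, p i))"
    if p: "p permutes {0..<n}" for p
  proof -
    have "(\<Prod>i = 0..<n. B $$ (i, p i)) = (\<Prod>i = 0..<n. f i * g (p i) * A $$ (i, p i))"
      using p by (intro prod.cong) (auto simp: entries permutes_in_image ac_simps)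
    also have "\<dots> = (\<Prod>i = 0..<n. f i) * (\<Prod>i = 0..<n. g (p i)) * (\<Prod>i = 0..<n. A $$ (i, p i))"
      by (simp add: prod.distrib)
    also have "(\<Prod>i = 0..<n. g (p i)) = (\<Prod>j = 0..<n. g j)"
      using prod.permute[OF p, of g] by (simp add: comp_def)
    finally show ?thesis by (simp add: atLeast0LessThan)
  qed
  show ?thesis
    unfolding det_def'[OF A] det_def'[OF B] sum_distrib_left sum_distrib_right
    by (intro sum.cong) (auto simp: term_eq ac_simps)
qed

(* Subtracting multiples of the first row from the other rows leaves the determinant unchanged:
   the operation is left multiplication by a unit lower triangular matrix. *)
lemma det_subtract_first_row:
  fixes A B :: "'a::comm_ring_1 mat"
  assumes A: "A \<in> carrier_mat n n" and B: "B \<in> carrier_mat n n"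
    and first_row: "\<And>j. j < n \<Longrightarrow> B $$ (0,j) = A $$ (0,j)"
    and other_rows: "\<And>i j. 0 < i \<Longrightarrow> i < n \<Longrightarrow> j < n \<Longrightarrow> B $$ (i,j) = A $$ (i,j) - c i * A $$ (0,j)"
  shows "det B = det A"
proof -
  define P :: "'a mat" where
    "P = mat n n (\<lambda>(i,l). (if l = i then 1 else 0) - (if l = 0 \<and> i \<noteq> 0 then c i else 0))"
  have P: "P \<in> carrier_mat n n" by (simp add: P_def)
  have "det P = prod_list (diag_mat P)"
    by (rule det_lower_triangular[OF _ P]) (auto simp: P_def)
  also have "\<dots> = 1"
    by (auto simp: prod_list_diag_prod P_def intro!: prod.neutral)
  finally have det_P: "det P = 1" .
  have "B = P * A"
  proof (rule eq_matI)
    fix i j assume "i < dim_row (P * A)" "j < dim_col (P * A)"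
    then have ij: "i < n" "j < n" using P A by auto
    have "(P * A) $$ (i,j) = (\<Sum>l = 0..<n. (if l = i then A $$ (i,j) else 0)
                                 - (if l = 0 \<and> i \<noteq> 0 then c i * A $$ (0,j) else 0))"
      using ij P A by (auto simp: P_def scalar_prod_def left_diff_distrib intro!: sum.cong)
    also have "\<dots> = B $$ (i,j)"
      using ij by (cases "i = 0") (simp_all add: sum_subtractf first_row other_rows)
    finally show "B $$ (i,j) = (P * A) $$ (i,j)" ..
  qed (use A B P in auto)
  then show ?thesis
    using det_mult[OF P A] det_P by simp
qed

lemma det_subtract_first_col:
  fixes A B :: "'a::comm_ring_1 mat"
  assumes A: "A \<in> carrier_mat n n" and B: "B \<in> carrier_mat n n"
    and first_col: "\<And>i. i < n \<Longrightarrow> B $$ (i,0) = A $$ (i,0)"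
    and other_cols: "\<And>i j. 0 < j \<Longrightarrow> i < n \<Longrightarrow> j < n \<Longrightarrow> B $$ (i,j) = A $$ (i,j) - c j * A $$ (i,0)"
  shows "det B = det A"
proof -
  have "det (transpose_mat B) = det (transpose_mat A)"
    by (rule det_subtract_first_row[where c = c]) (use A B first_col other_cols in auto)
  then show ?thesis using det_transpose[OF A] det_transpose[OF B] by simp
qed

lemma det_unit_first_row:
  fixes A :: "'a::comm_ring_1 mat"
  assumes A: "A \<in> carrier_mat (Suc k) (Suc k)"
    and corner: "A $$ (0,0) = 1" and first_row: "\<And>j. 0 < j \<Longrightarrow> j < Suc k \<Longrightarrow> A $$ (0,j) = 0"
  shows "det A = det (mat k k (\<lambda>(i,j). A $$ (Suc i, Suc j)))"
proof -
  have "det A = (\<Sum>j<Suc k. A $$ (0,j) * cofactor A 0 j)"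
    by (rule laplace_expansion_row[OF A]) simp
  also have "\<dots> = cofactor A 0 0"
    by (auto simp: lessThan_Suc_eq_insert_0 first_row corner intro!: sum.neutral)
  also have "\<dots> = det (mat k k (\<lambda>(i,j). A $$ (Suc i, Suc j)))"
    unfolding cofactor_def using A by (auto simp: mat_delete_def intro!: arg_cong[where f = det])
  finally show ?thesis .
qed

definition cauchy_mat :: "nat \<Rightarrow> (nat \<Rightarrow> 'a::field) \<Rightarrow> (nat \<Rightarrow> 'a) \<Rightarrow> 'a mat" where
  "cauchy_mat n x y = mat n n (\<lambda>(i,j). 1 / (1 - x i * y j))"

definition diff_prod :: "nat \<Rightarrow> (nat \<Rightarrow> 'a::comm_ring_1) \<Rightarrow> 'a" where
  "diff_prod n x = (\<Prod>i<n. \<Prod>j\<in>{Suc i..<n}. x i - x j)"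

lemma diff_prod_Suc:
  "diff_prod (Suc n) x = (\<Prod>j<n. x 0 - x (Suc j)) * diff_prod n (\<lambda>i. x (Suc i))"
proof -
  have "diff_prod (Suc n) x = (\<Prod>j\<in>{Suc 0..<Suc n}. x 0 - x j)
          * (\<Prod>i<n. \<Prod>j\<in>{Suc (Suc i)..<Suc n}. x (Suc i) - x j)"
    unfolding diff_prod_def by (rule prod.lessThan_Suc_shift)
  then show ?thesis
    unfolding diff_prod_def prod.shift_bounds_Suc_ivl atLeast0LessThan .
qed

lemma diff_prod_nonzero:
  fixes x :: "nat \<Rightarrow> 'a::idom"
  assumes "\<And>i j. i < j \<Longrightarrow> j < n \<Longrightarrow> x i \<noteq> x j"
  shows "diff_prod n x \<noteq> 0"
  using assms by (auto simp: diff_prod_def)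

lemma diff_prod_scale:
  "diff_prod n (\<lambda>i. c * x i) = c ^ (n * (n - 1) div 2) * diff_prod n x"
proof (induction n arbitrary: x)
  case 0
  then show ?case by (simp add: diff_prod_def)
next
  case (Suc n)
  have exp: "n + n * (n - 1) div 2 = Suc n * (Suc n - 1) div 2"
    by (cases n) auto
  have "diff_prod (Suc n) (\<lambda>i. c * x i)
      = (\<Prod>j<n. c * (x 0 - x (Suc j))) * (c ^ (n * (n - 1) div 2) * diff_prod n (\<lambda>i. x (Suc i)))"
    by (simp add: diff_prod_Suc Suc.IH right_diff_distrib)
  also have "\<dots> = c ^ (n + n * (n - 1) div 2) * diff_prod (Suc n) x"
    by (simp add: diff_prod_Suc prod.distrib power_add)
  finally show ?case by (simp only: exp)
qed

lemma det_cauchy_mat_Suc: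
  fixes x y :: "nat \<Rightarrow> 'a::field"
  assumes nz: "\<And>i j. i < Suc k \<Longrightarrow> j < Suc k \<Longrightarrow> 1 - x i * y j \<noteq> 0"
  shows "det (cauchy_mat (Suc k) x y)
    = (\<Prod>j<Suc k. 1 / (1 - x 0 * y j)) * (\<Prod>i<k. (x 0 - x (Suc i)) / (1 - x (Suc i) * y 0))
      * det (cauchy_mat k (\<lambda>i. x (Suc i)) (\<lambda>j. y (Suc j))) * (\<Prod>j<k. y 0 - y (Suc j))"
proof -
  let ?n = "Suc k"
  define a where "a j = 1 / (1 - x 0 * y j)" for j
  define c where "c i = (x 0 - x (Suc i)) / (1 - x (Suc i) * y 0)" for i
  define d where "d j = y 0 - y (Suc j)" for j
  define C' where "C' = cauchy_mat k (\<lambda>i. x (Suc i)) (\<lambda>j. y (Suc j))"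
  define R where "R = mat ?n ?n (\<lambda>(i,j). if i = 0 then 1 else (x i - x 0) * y j / (1 - x i * y j))"
  define S where "S = mat ?n ?n (\<lambda>(i,j). if i = 0 then (if j = 0 then 1 else 0)
                       else if j = 0 then R $$ (i,0) else c (i - 1) * C' $$ (i - 1, j - 1) * d (j - 1))"
  have R: "R \<in> carrier_mat ?n ?n" and S: "S \<in> carrier_mat ?n ?n" and C': "C' \<in> carrier_mat k k"
    by (simp_all add: R_def S_def C'_def cauchy_mat_def)
  have "det (cauchy_mat ?n x y) = det (mat ?n ?n (\<lambda>(i,j). R $$ (i,j) * a j))"
  proof (rule det_subtract_first_row[where c = "\<lambda>_. 1", symmetric])
    fix i j assume ij: "0 < i" "i < ?n" "j < ?n"
    have "1 - x i * y j \<noteq> 0" "1 - x 0 * y j \<noteq> 0" using nz ij by auto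
    then show "mat ?n ?n (\<lambda>(i,j). R $$ (i,j) * a j) $$ (i,j)
        = cauchy_mat ?n x y $$ (i,j) - 1 * cauchy_mat ?n x y $$ (0,j)"
      using ij by (simp add: R_def a_def cauchy_mat_def field_simps)
  qed (simp_all add: R_def a_def cauchy_mat_def)
  also have "\<dots> = det R * (\<Prod>j<?n. a j)"
    by (subst det_scale_rows_cols[OF R, where f = "\<lambda>_. 1" and g = a]) (use R in auto)
  also have "det R = det S"
  proof (rule det_subtract_first_col[where c = "\<lambda>_. 1", symmetric])
    fix i j assume ij: "0 < j" "i < ?n" "j < ?n"
    show "S $$ (i,j) = R $$ (i,j) - 1 * R $$ (i,0)"
    proof (cases "i = 0")
      case False
      have "1 - x i * y j \<noteq> 0" "1 - x i * y 0 \<noteq> 0" using nz ij by auto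
      with False ij show ?thesis
        by (simp add: S_def R_def c_def d_def C'_def cauchy_mat_def field_simps)
    qed (use ij in \<open>simp add: S_def R_def\<close>)
  qed (simp_all add: R S S_def R_def)
  also have "\<dots> = det (mat k k (\<lambda>(i,j). S $$ (Suc i, Suc j)))"
    by (rule det_unit_first_row[OF S]) (simp_all add: S_def)
  also have "\<dots> = (\<Prod>i<k. c i) * det C' * (\<Prod>j<k. d j)"
    by (rule det_scale_rows_cols[OF C']) (simp_all add: S_def)
  finally show ?thesis
    by (simp add: a_def c_def d_def C'_def ac_simps)
qed

lemma prod_square_Suc:
  fixes h :: "nat \<Rightarrow> nat \<Rightarrow> 'a::comm_monoid_mult"
  shows "(\<Prod>i<Suc k. \<Prod>j<Suc k. h i j)
    = (\<Prod>j<Suc k. h 0 j) * (\<Prod>i<k. h (Suc i) 0) * (\<Prod>i<k. \<Prod>j<k. h (Suc i) (Suc j))"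
  by (simp add: prod.lessThan_Suc_shift prod.distrib ac_simps del: prod.lessThan_Suc)

lemma det_cauchy_mat:
  fixes x y :: "nat \<Rightarrow> 'a::field"
  assumes "\<And>i j. i < n \<Longrightarrow> j < n \<Longrightarrow> 1 - x i * y j \<noteq> 0"
  shows "det (cauchy_mat n x y) * (\<Prod>i<n. \<Prod>j<n. 1 - x i * y j) = diff_prod n x * diff_prod n y"
  using assms
proof (induction n arbitrary: x y)
  case 0
  then show ?case by (simp add: cauchy_mat_def diff_prod_def)
next
  case (Suc k)
  let ?x' = "\<lambda>i. x (Suc i)" and ?y' = "\<lambda>j. y (Suc j)"
  have IH: "det (cauchy_mat k ?x' ?y') * (\<Prod>i<k. \<Prod>j<k. 1 - ?x' i * ?y' j) = diff_prod k ?x' * diff_prod k ?y'"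
    by (rule Suc.IH) (rule Suc.prems; simp)
  have first_row: "(\<Prod>j<Suc k. 1 / (1 - x 0 * y j)) * (\<Prod>j<Suc k. 1 - x 0 * y j) = 1"
    using Suc.prems by (simp add: prod_dividef)
  have first_col: "(\<Prod>i<k. (x 0 - x (Suc i)) / (1 - x (Suc i) * y 0)) * (\<Prod>i<k. 1 - x (Suc i) * y 0)
      = (\<Prod>i<k. x 0 - x (Suc i))"
    using Suc.prems by (simp add: prod_dividef)
  have step: "det (cauchy_mat (Suc k) x y)
    = (\<Prod>j<Suc k. 1 / (1 - x 0 * y j)) * (\<Prod>i<k. (x 0 - x (Suc i)) / (1 - x (Suc i) * y 0))
      * det (cauchy_mat k ?x' ?y') * (\<Prod>j<k. y 0 - y (Suc j))"
    by (rule det_cauchy_mat_Suc) (rule Suc.prems)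
  have "det (cauchy_mat (Suc k) x y) * (\<Prod>i<Suc k. \<Prod>j<Suc k. 1 - x i * y j)
      = ((\<Prod>j<Suc k. 1 / (1 - x 0 * y j)) * (\<Prod>j<Suc k. 1 - x 0 * y j))
        * ((\<Prod>i<k. (x 0 - x (Suc i)) / (1 - x (Suc i) * y 0)) * (\<Prod>i<k. 1 - x (Suc i) * y 0))
        * (det (cauchy_mat k ?x' ?y') * (\<Prod>i<k. \<Prod>j<k. 1 - ?x' i * ?y' j)) * (\<Prod>j<k. y 0 - y (Suc j))"
    unfolding step prod_square_Suc by (simp only: ac_simps)
  also have "\<dots> = diff_prod (Suc k) x * diff_prod (Suc k) y"
    unfolding first_row first_col IH diff_prod_Suc by (simp only: ac_simps mult_1_left)
  finally show ?case .
qed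

lemma prod_shift_block:
  "(\<Prod>i\<in>{a+1..a+m}. g i) = (\<Prod>i<m. g (a + Suc i))"
  by (rule prod.reindex_bij_witness[where i = "\<lambda>i. a + Suc i" and j = "\<lambda>i. i - Suc a"]) auto

lemma diff_prod_block:
  "(\<Prod>i\<in>{a+1..a+m}. \<Prod>j\<in>{i+1..a+m}. w i - w j) = diff_prod m (\<lambda>i. w (a + Suc i))"
  unfolding prod_shift_block diff_prod_def
  by (intro prod.cong refl prod.reindex_bij_witness[where i = "\<lambda>j. a + Suc j" and j = "\<lambda>j. j - Suc a"]) auto

lemma four_power_half_pairs: "(4::'a::comm_semiring_1) ^ (n * (n - 1) div 2) = 2 ^ (n * (n - 1))"
proof -
  have "n * (n - 1) = 2 * (n * (n - 1) div 2)" by (cases n) auto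
  then show ?thesis by (metis power_mult numeral_Bit0_eq_double mult_2 power2_eq_square)
qed

lemma H_fun_one_cauchy_form:
  "H_fun 1 m w =
     (\<Prod>i<m. \<Prod>j<m. 1 - 4 * w (Suc i) * w (m + Suc j))
     / (diff_prod m (\<lambda>i. w (Suc i)) * diff_prod m (\<lambda>j. w (m + Suc j)))
     * det (cauchy_mat m (\<lambda>i. 4 * w (Suc i)) (\<lambda>j. w (m + Suc j)))"
proof -
  have h_one: "h_fun 1 a b = 1 - 4 * a * b" for a b by (simp add: h_fun_def)
  have "(\<Prod>i\<in>{1..m}. \<Prod>j\<in>{m+1..2*m}. h_fun 1 (w i) (w j))
      = (\<Prod>i<m. \<Prod>j<m. 1 - 4 * w (Suc i) * w (m + Suc j))"
    unfolding mult_2 prod_shift_block[where a = m] h_one by (simp add: prod.atLeast1_atMost_eq)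
  moreover have "(\<Prod>i\<in>{1..m}. \<Prod>j\<in>{i+1..m}. w i - w j) = diff_prod m (\<lambda>i. w (Suc i))"
    using diff_prod_block[where a = 0 and m = m and w = w] by simp
  moreover have "(\<Prod>i\<in>{m+1..2*m}. \<Prod>j\<in>{i+1..2*m}. w i - w j) = diff_prod m (\<lambda>j. w (m + Suc j))"
    using diff_prod_block[where a = m and m = m and w = w] by (simp add: mult_2)
  moreover have "mat m m (\<lambda>(i, j). 1 / h_fun 1 (w (i + 1)) (w (m + j + 1)))
      = cauchy_mat m (\<lambda>i. 4 * w (Suc i)) (\<lambda>j. w (m + Suc j))"
    by (auto simp: cauchy_mat_def h_one mult.assoc intro!: eq_matI)
  ultimately show ?thesis by (simp add: H_fun_def)
qed

theorem mainTheorem9: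
  fixes m :: nat and w :: "nat \<Rightarrow> complex"
  assumes "m \<ge> 1"
    and "\<And>i j. 1 \<le> i \<Longrightarrow> i < j \<Longrightarrow> j \<le> m \<Longrightarrow> w i \<noteq> w j"
    and "\<And>i j. m + 1 \<le> i \<Longrightarrow> i < j \<Longrightarrow> j \<le> 2 * m \<Longrightarrow> w i \<noteq> w j"
    and "\<And>i j. 1 \<le> i \<Longrightarrow> i \<le> m \<Longrightarrow> m + 1 \<le> j \<Longrightarrow> j \<le> 2 * m \<Longrightarrow> h_fun 1 (w i) (w j) \<noteq> 0"
  shows "H_fun 1 m w = 2 ^ (m * (m - 1))"
proof -
  define u where "u i = w (Suc i)" for i
  define v where "v j = w (m + Suc j)" for j
  have kernel_nz: "1 - 4 * u i * v j \<noteq> 0" if "i < m" "j < m" for i j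
    using assms(4)[of "Suc i" "m + Suc j"] that by (simp add: h_fun_def u_def v_def mult.assoc)
  have u_nz: "diff_prod m u \<noteq> 0"
    using assms(2) by (intro diff_prod_nonzero) (simp add: u_def)
  have v_nz: "diff_prod m v \<noteq> 0"
    using assms(3) by (intro diff_prod_nonzero) (simp add: v_def)
  have kernels_nz: "(\<Prod>i<m. \<Prod>j<m. 1 - 4 * u i * v j) \<noteq> 0"
    using kernel_nz by simp
  have "det (cauchy_mat m (\<lambda>i. 4 * u i) v) * (\<Prod>i<m. \<Prod>j<m. 1 - 4 * u i * v j)
      = diff_prod m (\<lambda>i. 4 * u i) * diff_prod m v"
    by (rule det_cauchy_mat) (rule kernel_nz)
  also have "\<dots> = 2 ^ (m * (m - 1)) * diff_prod m u * diff_prod m v"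
    unfolding diff_prod_scale four_power_half_pairs ..
  finally have cauchy: "det (cauchy_mat m (\<lambda>i. 4 * u i) v) * (\<Prod>i<m. \<Prod>j<m. 1 - 4 * u i * v j)
      = 2 ^ (m * (m - 1)) * diff_prod m u * diff_prod m v" .
  show ?thesis
    unfolding H_fun_one_cauchy_form u_def[symmetric] v_def[symmetric]
    using cauchy u_nz v_nz kernels_nz by (simp add: field_simps)
qed

end
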